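(* Every real binary quartic form $p\in F_{2,4}$ has a unique signature, i.e. $\mathcal B(p)$ has exactly one minimal element with respect to $\preceq$.
   Context: $F_{2,4}$ is the space of real binary forms of degree $4$ in $x,y$. A representation of $p\in F_{2,4}$ is an expression $p=\sum_{j=1}^r\lambda_j(\alpha_jx+\beta_jy)^{4}$ with $r\ge0$ (empty sum $=0$), $\alpha_j,\beta_j\in\mathbb R$, $0\ne\lambda_j\in\mathbb R$; it is honest if the linear forms $\alpha_jx+\beta_jy$ are pairwise non-proportional. Its badge is $(a,b)$ where $a=\#\{j:\lambda_j>0\}$, $b=\#\{j:\lambda_j<0\}$. $\mathcal B(p)$ is the set of badges of honest representations of $p$. Badges are ordered by $(a,b)\preceq(c,d)$ iff $a\le c$ and $b\le d$; a signature of $p$ is a minimal element of $\mathcal B(p)$. *)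

theory Defs
  imports Complex_Main
begin

definition binary_quartic :: "(real \<Rightarrow> real \<Rightarrow> real) \<Rightarrow> bool" where
  "binary_quartic p \<longleftrightarrow>
     (\<exists>c :: nat \<Rightarrow> real. \<forall>x y. p x y = (\<Sum>i\<le>4. c i * x ^ i * y ^ (4 - i)))"

definition is_representation :: "(real \<Rightarrow> real \<Rightarrow> real) \<Rightarrow> (real \<times> real \<times> real) list \<Rightarrow> bool" where
  "is_representation p rs \<longleftrightarrow>
     (\<forall>t\<in>set rs. fst t \<noteq> 0) \<and>
     (\<forall>x y. p x y = (\<Sum>(l, a, b)\<leftarrow>rs. l * (a * x + b * y) ^ 4))"

text \<open>Two linear forms a x + b y and a' x + b' y are proportional iff a b' - a' b = 0.\<close>
definition proportional :: "real \<times> real \<Rightarrow> real \<times> real \<Rightarrow> bool" where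
  "proportional u v \<longleftrightarrow> fst u * snd v - fst v * snd u = 0"

definition honest :: "(real \<times> real \<times> real) list \<Rightarrow> bool" where
  "honest rs \<longleftrightarrow>
     (\<forall>i<length rs. \<forall>j<length rs. i \<noteq> j \<longrightarrow> \<not> proportional (snd (rs ! i)) (snd (rs ! j)))"

definition badge :: "(real \<times> real \<times> real) list \<Rightarrow> nat \<times> nat" where
  "badge rs = (length (filter (\<lambda>t. fst t > 0) rs), length (filter (\<lambda>t. fst t < 0) rs))"

definition badges :: "(real \<Rightarrow> real \<Rightarrow> real) \<Rightarrow> (nat \<times> nat) set" where
  "badges p = {badge rs | rs. is_representation p rs \<and> honest rs}"

definition badge_le :: "nat \<times> nat \<Rightarrow> nat \<times> nat \<Rightarrow> bool" where
  "badge_le u v \<longleftrightarrow> fst u \<le> fst v \<and> snd u \<le> snd v"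

definition is_signature :: "(real \<Rightarrow> real \<Rightarrow> real) \<Rightarrow> nat \<times> nat \<Rightarrow> bool" where
  "is_signature p s \<longleftrightarrow> s \<in> badges p \<and> (\<forall>t\<in>badges p. badge_le t s \<longrightarrow> t = s)"

end

theory Submission
  imports Defs "HOL-Computational_Algebra.Polynomial"
begin

text \<open>
  Every real binary quartic p has a least badge with respect to the componentwise order,
  hence exactly one signature.  A quartic is a sum of fourth powers, so for every
  representation R of p the weighted evaluation functional f \<mapsto> \<Sum> l f(a, b) over
  the terms (l, a, b) of R is determined by p on all quartic forms (apolarity).

  It then shows:
  \<^item> every sum of weighted fourth powers can be made proper (honest, with nonzero
    weights and linear forms) without increasing its badge or length;
  \<^item> an exchange lemma: a positive combination of at least three evaluations equals a
    nonnegative combination of three evaluations, one at any other prescribed point.  The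
    proof uses the apolar quadratic, which positivity forces to have two real zeros, and
    interpolation at three points.  Hence a proper representation with at least four
    terms and three terms of equal sign can be shortened, and every proper representation
    reduces to one with at most three terms or with badge (2, 2);
  \<^item> a proper representation with at most three terms has badge below that of every
    proper representation, by testing both with the square of a suitable quadratic form.
  The least badge is therefore the badge of a proper representation with at most three
  terms if one exists, and (2, 2) otherwise.
\<close>

definition homog :: "nat \<Rightarrow> real poly \<Rightarrow> real \<Rightarrow> real \<Rightarrow> real" where
  "homog n P a b = (\<Sum>i\<le>n. coeff P i * a ^ i * b ^ (n - i))"

lemma homog_eq_poly:
  assumes "b \<noteq> 0" "degree P \<le> n"
  shows "homog n P a b = b ^ n * poly P (a / b)"
proof -
  have "poly P (a/b) = (\<Sum>i\<le>n. coeff P i * (a/b) ^ i)"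
    using assms(2) by (simp add: poly_altdef, intro sum.mono_neutral_left) (auto simp: coeff_eq_0)
  hence "b ^ n * poly P (a / b) = (\<Sum>i\<le>n. coeff P i * ((a/b) ^ i * b ^ n))"
    by (simp add: sum_distrib_left mult_ac)
  also have "\<dots> = (\<Sum>i\<le>n. coeff P i * a ^ i * b ^ (n - i))"
  proof (intro sum.cong refl)
    fix i assume "i \<in> {..n}"
    hence "b ^ n = b ^ i * b ^ (n - i)" by (simp add: power_add[symmetric])
    thus "coeff P i * ((a/b) ^ i * b ^ n) = coeff P i * a ^ i * b ^ (n - i)"
      using assms(1) by (simp add: power_divide field_simps)
  qed
  finally show ?thesis by (simp add: homog_def)
qed

lemma homog_at_infinity: "homog n P a 0 = coeff P n * a ^ n"
proof -
  have "homog n P a 0 = (\<Sum>i\<le>n. if i = n then coeff P n * a ^ n else 0)"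
    unfolding homog_def by (intro sum.cong refl) auto
  thus ?thesis by simp
qed

lemma homog_scale: "homog n P (c * a) (c * b) = c ^ n * homog n P a b"
proof -
  have "coeff P i * (c * a) ^ i * (c * b) ^ (n - i) = c ^ n * (coeff P i * a ^ i * b ^ (n - i))"
    if "i \<le> n" for i
  proof -
    have "c ^ i * c ^ (n - i) = c ^ n" using that by (simp add: power_add[symmetric])
    thus ?thesis by (simp add: power_mult_distrib algebra_simps)
  qed
  thus ?thesis unfolding homog_def sum_distrib_left by (intro sum.cong) auto
qed

lemma coeff_mult_top:
  assumes "degree P \<le> n" "degree Q \<le> m"
  shows "coeff (P * Q) (n + m) = coeff P n * coeff Q m"
proof (cases "degree P = n \<and> degree Q = m")
  case True thus ?thesis using coeff_mult_degree_sum[of P Q] by simp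
next
  case False
  hence "coeff P n * coeff Q m = 0" using assms by (auto simp: coeff_eq_0)
  moreover have "degree (P * Q) < n + m \<or> P * Q = 0"
    using False assms degree_mult_le[of P Q] by (cases "P = 0 \<or> Q = 0") (auto simp: degree_mult_eq)
  ultimately show ?thesis by (auto simp: coeff_eq_0)
qed

lemma homog_mult:
  assumes "degree P \<le> n" "degree Q \<le> m"
  shows "homog (n + m) (P * Q) a b = homog n P a b * homog m Q a b"
proof (cases "b = 0")
  case True thus ?thesis using coeff_mult_top[OF assms] by (simp add: homog_at_infinity power_add)
next
  case False
  have "degree (P * Q) \<le> n + m" using degree_mult_le[of P Q] assms by linarith
  thus ?thesis using False assms by (simp add: homog_eq_poly power_add poly_mult)
qed

lemma homog_add: "homog n (P + Q) a b = homog n P a b + homog n Q a b"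
  by (simp add: homog_def sum.distrib algebra_simps)

lemma homog_smult: "homog n (smult c P) a b = c * homog n P a b"
  by (simp add: homog_def sum_distrib_left algebra_simps)

lemma homog_Suc0: "homog (Suc 0) P a b = coeff P 0 * b + coeff P 1 * a"
  by (simp add: homog_def)

lemma homog_0: "homog 0 P a b = coeff P 0"
  by (simp add: homog_def)

abbreviation ev :: "(real \<Rightarrow> real \<Rightarrow> real) \<Rightarrow> real \<times> real \<Rightarrow> real" where
  "ev f t \<equiv> f (fst t) (snd t)"

definition hform :: "nat \<Rightarrow> (real \<Rightarrow> real \<Rightarrow> real) \<Rightarrow> bool" where
  "hform n f \<longleftrightarrow> (\<exists>P. degree P \<le> n \<and> (\<forall>a b. f a b = homog n P a b))"

lemma hform_cong: "hform n f \<Longrightarrow> (\<And>a b. f a b = g a b) \<Longrightarrow> hform n g"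
  by (metis ext)

lemma hform_add: "hform n f \<Longrightarrow> hform n g \<Longrightarrow> hform n (\<lambda>a b. f a b + g a b)"
  unfolding hform_def by (metis (no_types, lifting) degree_add_le homog_add)

lemma hform_smult: "hform n f \<Longrightarrow> hform n (\<lambda>a b. c * f a b)"
  unfolding hform_def by (metis (no_types, lifting) degree_smult_le dual_order.trans homog_smult)

lemma hform_diff: "hform n f \<Longrightarrow> hform n g \<Longrightarrow> hform n (\<lambda>a b. f a b - g a b)"
  using hform_add[of n f "\<lambda>a b. (-1) * g a b"] hform_smult[of n g "-1"] by simp

lemma hform_mult: "hform n f \<Longrightarrow> hform m g \<Longrightarrow> hform (n + m) (\<lambda>a b. f a b * g a b)"
  unfolding hform_def
proof (elim exE conjE)
  fix P Q assume "degree P \<le> n" "\<forall>a b. f a b = homog n P a b" "degree Q \<le> m" "\<forall>a b. g a b = homog m Q a b"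
  thus "\<exists>R. degree R \<le> n + m \<and> (\<forall>a b. f a b * g a b = homog (n + m) R a b)"
    by (intro exI[of _ "P * Q"]) (auto intro: order.trans[OF degree_mult_le] simp: homog_mult)
qed

lemma hform_homogeneous: "hform n f \<Longrightarrow> f (c * a) (c * b) = c ^ n * f a b"
  unfolding hform_def using homog_scale by auto

lemma hform_linear: "hform 1 (\<lambda>a b. r * a + s * b)"
  unfolding hform_def by (intro exI[of _ "[:s, r:]"]) (auto simp: homog_Suc0 algebra_simps)

lemma hform1_E:
  assumes "hform 1 f" obtains r s where "\<And>a b. f a b = r * a + s * b"
proof -
  obtain P where "\<forall>a b. f a b = homog 1 P a b" using assms unfolding hform_def by blast
  thus ?thesis using that[of "coeff P 1" "coeff P 0"] by (simp add: homog_Suc0 algebra_simps)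
qed

lemma hform0_E: assumes "hform 0 f" obtains c where "\<And>a b. f a b = c"
  using assms unfolding hform_def by (auto simp: homog_0)

lemma hform_quadratic: "hform 2 (\<lambda>a b. g2 * a ^ 2 + g1 * a * b + g0 * b ^ 2)"
  unfolding hform_def
  by (intro exI[of _ "[:g0, g1, g2:]"]) (auto simp: homog_def eval_nat_numeral algebra_simps)

lemma hform_square: "hform n f \<Longrightarrow> hform (2 * n) (\<lambda>a b. f a b ^ 2)"
  using hform_mult[of n f n f] by (simp add: mult_2 power2_eq_square)

lemma hform_fourth_power: "hform 4 (\<lambda>a b. (a * x + b * y) ^ 4)"
proof -
  have "hform (2 * (2 * 1)) (\<lambda>a b. ((x * a + y * b) ^ 2) ^ 2)"
    by (intro hform_square hform_linear)
  hence "hform 4 (\<lambda>a b. ((x * a + y * b) ^ 2) ^ 2)" by simp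
  thus ?thesis by (rule hform_cong) (simp add: algebra_simps flip: power_mult)
qed

definition line_form :: "real \<times> real \<Rightarrow> real \<Rightarrow> real \<Rightarrow> real" where
  "line_form t a b = snd t * a - fst t * b"

lemma hform_line_form: "hform 1 (line_form t)"
  using hform_linear[of "snd t" "- fst t"] unfolding line_form_def by (rule hform_cong) simp

lemma proportional_sym: "proportional u v \<longleftrightarrow> proportional v u"
  unfolding proportional_def by auto

lemma proportional_refl: "proportional u u"
  unfolding proportional_def by simp

lemma line_form_eq_0_iff: "ev (line_form t) u = 0 \<longleftrightarrow> proportional t u"
  unfolding line_form_def proportional_def by (auto simp: algebra_simps)

lemma line_form_identically_zero:
  assumes "\<And>a b. line_form t a b = 0" shows "t = (0, 0)"
  using assms[of 1 0] assms[of 0 1] by (simp add: line_form_def prod_eq_iff)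

lemma line_form_proportional:
  assumes "t \<noteq> (0, 0)" "proportional t u"
  obtains k where "\<And>a b. line_form u a b = k * line_form t a b"
proof (cases "fst t = 0")
  case True
  hence "snd t \<noteq> 0" "fst u = 0" using assms by (auto simp: proportional_def prod_eq_iff)
  thus ?thesis using True that[of "snd u / snd t"] by (simp add: line_form_def)
next
  case False
  thus ?thesis using assms that[of "fst u / fst t"] by (simp add: line_form_def proportional_def field_simps)
qed

lemma proportional_trans:
  assumes "q \<noteq> (0, 0)" "proportional t q" "proportional q t'"
  shows "proportional t t'"
proof -
  obtain k where k: "\<And>a b. line_form t a b = k * line_form q a b"
    using line_form_proportional[OF assms(1)] assms(2) proportional_sym by blast
  have "line_form q (fst t') (snd t') = 0" using assms(3) by (simp add: line_form_eq_0_iff)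
  hence "line_form t (fst t') (snd t') = 0" by (simp add: k)
  thus ?thesis by (simp add: line_form_eq_0_iff)
qed

lemma hform_div_infinite_root:
  assumes "hform (Suc n) f" "f c 0 = 0" "c \<noteq> 0"
  obtains g where "hform n g" "\<And>a b. f a b = b * g a b"
proof -
  obtain P where P: "degree P \<le> Suc n" "\<And>a b. f a b = homog (Suc n) P a b"
    using assms(1) unfolding hform_def by blast
  have "coeff P (Suc n) = 0" using assms(2,3) by (simp add: P homog_at_infinity)
  have dP: "degree P \<le> n"
  proof (intro degree_le allI impI)
    fix i assume "n < i"
    thus "coeff P i = 0" using \<open>coeff P (Suc n) = 0\<close> P(1) by (cases "i = Suc n") (auto intro: coeff_eq_0)
  qed
  have "homog (1 + n) ([:1:] * P) a b = homog 1 [:1:] a b * homog n P a b" for a b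
    by (rule homog_mult) (use dP in auto)
  hence "f a b = b * homog n P a b" for a b by (simp add: P homog_Suc0)
  moreover have "hform n (homog n P)" using dP unfolding hform_def by blast
  ultimately show ?thesis using that by blast
qed

lemma hform_div_finite_root:
  assumes "hform (Suc n) f" "f r 1 = 0"
  obtains g where "hform n g" "\<And>a b. f a b = (a - r * b) * g a b"
proof -
  obtain P where P: "degree P \<le> Suc n" "\<And>a b. f a b = homog (Suc n) P a b"
    using assms(1) unfolding hform_def by blast
  have "poly P r = 0" using assms(2) homog_eq_poly[of 1 P "Suc n" r] by (simp add: P)
  then obtain Q where Q: "P = [:-r, 1:] * Q" using poly_eq_0_iff_dvd by blast
  have dQ: "degree Q \<le> n"
  proof (cases "Q = 0")
    case False
    hence "degree P = 1 + degree Q" unfolding Q by (subst degree_mult_eq) auto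
    thus ?thesis using P(1) by simp
  qed simp
  have "homog (1 + n) ([:-r, 1:] * Q) a b = homog 1 [:-r, 1:] a b * homog n Q a b" for a b
    by (rule homog_mult) (use dQ in auto)
  hence "f a b = (a - r * b) * homog n Q a b" for a b by (simp add: P Q homog_Suc0)
  moreover have "hform n (homog n Q)" using dQ unfolding hform_def by blast
  ultimately show ?thesis using that by blast
qed

lemma hform_div:
  assumes "hform (Suc n) f" "ev f t = 0" "t \<noteq> (0, 0)"
  obtains g where "hform n g" "\<And>a b. f a b = line_form t a b * g a b"
proof (cases "snd t = 0")
  case True
  hence "f (fst t) 0 = 0" "fst t \<noteq> 0" using assms(2,3) by (auto simp: prod_eq_iff)
  then obtain g where g: "hform n g" "\<And>a b. f a b = b * g a b"
    using hform_div_infinite_root[OF assms(1)] by blast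
  show ?thesis
  proof (rule that)
    show "hform n (\<lambda>a b. (- 1 / fst t) * g a b)" using g(1) by (rule hform_smult)
    show "f a b = line_form t a b * ((- 1 / fst t) * g a b)" for a b
      using g(2) \<open>fst t \<noteq> 0\<close> True by (simp add: line_form_def)
  qed
next
  case False
  have "f (fst t / snd t) 1 = (1 / snd t) ^ Suc n * ev f t"
    using hform_homogeneous[OF assms(1), of "1 / snd t" "fst t" "snd t"] False by simp
  hence root: "f (fst t / snd t) 1 = 0" using assms(2) by simp
  obtain g where g: "hform n g" "\<And>a b. f a b = (a - fst t / snd t * b) * g a b"
    using hform_div_finite_root[OF assms(1) root] by blast
  show ?thesis
  proof (rule that)
    show "hform n (\<lambda>a b. (1 / snd t) * g a b)" using g(1) by (rule hform_smult)
    show "f a b = line_form t a b * ((1 / snd t) * g a b)" for a b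
      using g(2) False by (simp add: line_form_def field_simps)
  qed
qed

lemma hform_factor_roots:
  assumes "hform (length ts + n) f" "sorted_wrt (\<lambda>u v. \<not> proportional u v) ts"
    "\<forall>t\<in>set ts. t \<noteq> (0, 0) \<and> ev f t = 0"
  shows "\<exists>g. hform n g \<and> (\<forall>a b. f a b = (\<Prod>t\<leftarrow>ts. line_form t a b) * g a b)"
  using assms
proof (induction ts arbitrary: f)
  case Nil thus ?case by auto
next
  case (Cons t ts)
  obtain h where h: "hform (length ts + n) h" "\<And>a b. f a b = line_form t a b * h a b"
    using hform_div[of "length ts + n" f t] Cons.prems by auto
  have "ev h u = 0" if "u \<in> set ts" for u
  proof -
    have "ev (line_form t) u \<noteq> 0" using Cons.prems(2) that by (simp add: line_form_eq_0_iff)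
    thus ?thesis using Cons.prems(3) that h(2)[of "fst u" "snd u"] by simp
  qed
  then obtain g where "hform n g" "\<forall>a b. h a b = (\<Prod>t\<leftarrow>ts. line_form t a b) * g a b"
    using Cons.IH[OF h(1)] Cons.prems(2,3) by auto
  thus ?case using h(2) by (intro exI[of _ g]) (simp add: mult.assoc)
qed

lemma hform_vanishing:
  assumes "hform n f" "length ts = Suc n" "sorted_wrt (\<lambda>u v. \<not> proportional u v) ts"
    "\<forall>t\<in>set ts. t \<noteq> (0, 0) \<and> ev f t = 0"
  shows "f a b = 0"
proof -
  obtain t ts' where ts: "ts = t # ts'" using assms(2) by (cases ts) auto
  obtain g where g: "hform 0 g" "\<forall>a b. f a b = (\<Prod>u\<leftarrow>ts'. line_form u a b) * g a b"
    using hform_factor_roots[of ts' 0 f] assms ts by auto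
  obtain c where c: "\<And>a b. g a b = c" using hform0_E[OF g(1)] by blast
  have "(\<Prod>u\<leftarrow>ts'. ev (line_form u) t) \<noteq> 0"
    using assms(3) by (auto simp: ts prod_list_zero_iff line_form_eq_0_iff proportional_sym)
  hence "c = 0" using assms(4) g(2) c ts by auto
  thus ?thesis using g(2) c by simp
qed

text \<open>Sums of weighted fourth powers and the weighted evaluation functional.\<close>

text \<open>The sum of weighted fourth powers described by a list of terms (l, a, b); unlike
  is_representation this allows zero weights.\<close>
definition powsum :: "(real \<times> real \<times> real) list \<Rightarrow> real \<Rightarrow> real \<Rightarrow> real" where
  "powsum R x y = (\<Sum>(l, a, b)\<leftarrow>R. l * (a * x + b * y) ^ 4)"

lemma powsum_Nil [simp]: "powsum [] x y = 0"
  by (simp add: powsum_def)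

lemma powsum_Cons [simp]:
  "powsum (t # R) x y = fst t * (fst (snd t) * x + snd (snd t) * y) ^ 4 + powsum R x y"
  by (simp add: powsum_def split_def)

lemma sum_list_mset_eq: "mset R = mset S \<Longrightarrow> sum_list (map f R) = sum_list (map (f :: 'a \<Rightarrow> real) S)"
  by (metis mset_map sum_mset_sum_list)

lemma powsum_perm: assumes "mset R = mset S" shows "powsum R = powsum S"
  unfolding powsum_def fun_eq_iff by (intro allI sum_list_mset_eq[OF assms])

lemma is_representation_iff: "is_representation p R \<longleftrightarrow> (\<forall>t\<in>set R. fst t \<noteq> 0) \<and> p = powsum R"
  unfolding is_representation_def powsum_def fun_eq_iff by blast

definition wsum :: "(real \<times> real \<times> real) list \<Rightarrow> (real \<Rightarrow> real \<Rightarrow> real) \<Rightarrow> real" where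
  "wsum R f = (\<Sum>(l, a, b)\<leftarrow>R. l * f a b)"

lemma wsum_Nil [simp]: "wsum [] f = 0"
  by (simp add: wsum_def)

lemma wsum_Cons [simp]: "wsum (t # R) f = fst t * ev f (snd t) + wsum R f"
  by (simp add: wsum_def split_def)

lemma wsum_add: "wsum R (\<lambda>a b. f a b + g a b) = wsum R f + wsum R g"
  by (induction R) (auto simp: algebra_simps)

lemma wsum_smult: "wsum R (\<lambda>a b. c * f a b) = c * wsum R f"
  by (induction R) (auto simp: algebra_simps)

lemma powsum_eq_wsum: "powsum R x y = wsum R (\<lambda>a b. (a * x + b * y) ^ 4)"
  by (induction R) auto

lemma wsum_powsum: "wsum R (powsum Q) = (\<Sum>(w, c, d)\<leftarrow>Q. w * powsum R c d)"
proof (induction Q)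
  case (Cons q Q)
  obtain w c d where q: "q = (w, c, d)" by (cases q) auto
  have "powsum R c d = wsum R (\<lambda>a b. (c * a + d * b) ^ 4)"
    by (simp add: powsum_eq_wsum mult.commute)
  thus ?case using Cons.IH by (simp add: q wsum_add wsum_smult)
qed (induction R, auto)

text \<open>Every quartic form is a combination of the fourth powers of x, y, x + y, x - y
  and x + 2y; the coefficients are found by solving a 5 x 5 linear system.\<close>
definition five_powers :: "(nat \<Rightarrow> real) \<Rightarrow> (real \<times> real \<times> real) list" where
  "five_powers c = [(c 1/8 - c 2/6 - c 3/8 + c 4, 1, 0), (c 0 - c 1/2 - c 2/6 + c 3/2, 0, 1),
     (- c 1/8 + c 2/12 + c 3/4, 1, 1), (- c 1/24 + c 2/12 - c 3/12, 1, -1), (c 1/24 - c 3/24, 1, 2)]"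

lemma quartic_eq_powsum: "(\<Sum>i\<le>4. c i * x ^ i * y ^ (4 - i)) = powsum (five_powers c) x y"
  by (simp add: five_powers_def powsum_def eval_nat_numeral field_simps)

lemma hform4_powsum: assumes "hform 4 f" obtains Q where "f = powsum Q"
proof -
  obtain P where "\<forall>a b. f a b = homog 4 P a b" using assms unfolding hform_def by blast
  hence "f = powsum (five_powers (coeff P))"
    by (simp add: fun_eq_iff homog_def quartic_eq_powsum del: powsum_Cons)
  thus ?thesis by (rule that)
qed

lemma binary_quartic_powsum: assumes "binary_quartic p" obtains R where "p = powsum R"
proof -
  obtain c where "\<forall>x y. p x y = (\<Sum>i\<le>4. c i * x ^ i * y ^ (4 - i))"
    using assms unfolding binary_quartic_def by blast
  hence "p = powsum (five_powers c)" by (simp add: fun_eq_iff quartic_eq_powsum del: powsum_Cons)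
  thus ?thesis by (rule that)
qed

text \<open>Apolarity: for a representation R of p, the functional f \<mapsto> wsum R f on
  quartic forms depends only on p, since quartic forms are sums of fourth powers.\<close>
lemma wsum_determined:
  assumes "powsum R1 = powsum R2" "hform 4 f"
  shows "wsum R1 f = wsum R2 f"
proof -
  obtain Q where "f = powsum Q" using hform4_powsum[OF assms(2)] .
  thus ?thesis by (simp only: wsum_powsum assms(1))
qed

text \<open>Proper representations and their badges.\<close>

definition nonprop :: "real \<times> real \<times> real \<Rightarrow> real \<times> real \<times> real \<Rightarrow> bool" where
  "nonprop u v \<longleftrightarrow> \<not> proportional (snd u) (snd v)"

definition proper :: "(real \<times> real \<times> real) list \<Rightarrow> bool" where
  "proper R \<longleftrightarrow> honest R \<and> (\<forall>t\<in>set R. snd t \<noteq> (0, 0))"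

lemma nonprop_sym: "nonprop u v \<longleftrightarrow> nonprop v u"
  unfolding nonprop_def using proportional_sym by blast

lemma honest_sorted: "honest R \<longleftrightarrow> sorted_wrt nonprop R"
proof -
  have "(\<forall>i<length R. \<forall>j<length R. i \<noteq> j \<longrightarrow> nonprop (R!i) (R!j)) \<longleftrightarrow>
        (\<forall>i j. i < j \<longrightarrow> j < length R \<longrightarrow> nonprop (R!i) (R!j))"
  proof (intro iffI allI impI)
    fix i j assume h: "\<forall>i j. i < j \<longrightarrow> j < length R \<longrightarrow> nonprop (R!i) (R!j)"
      and ij: "i < length R" "j < length R" "i \<noteq> j"
    show "nonprop (R!i) (R!j)"
    proof (cases "i < j")
      case False
      hence "j < i" using ij(3) by simp
      thus ?thesis using h ij nonprop_sym by blast
    qed (use h ij in blast)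
  qed auto
  thus ?thesis unfolding honest_def sorted_wrt_iff_nth_less nonprop_def by simp
qed

lemma honest_iff_pairwise:
  "honest R \<longleftrightarrow> distinct R \<and> (\<forall>u\<in>set R. \<forall>v\<in>set R. u \<noteq> v \<longrightarrow> nonprop u v)"
proof
  assume h: "honest R"
  have "distinct R" unfolding distinct_conv_nth
  proof (intro allI impI)
    fix i j assume "i < length R" "j < length R" "i \<noteq> j"
    thus "R ! i \<noteq> R ! j" using h proportional_refl unfolding honest_def by fastforce
  qed
  moreover have "nonprop u v" if uv: "u \<in> set R" "v \<in> set R" "u \<noteq> v" for u v
  proof -
    obtain i j where "i < length R" "j < length R" "R ! i = u" "R ! j = v"
      using uv(1,2) by (auto simp: in_set_conv_nth)
    thus ?thesis using h uv(3) unfolding honest_def nonprop_def by blast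
  qed
  ultimately show "distinct R \<and> (\<forall>u\<in>set R. \<forall>v\<in>set R. u \<noteq> v \<longrightarrow> nonprop u v)" by blast
next
  assume h: "distinct R \<and> (\<forall>u\<in>set R. \<forall>v\<in>set R. u \<noteq> v \<longrightarrow> nonprop u v)"
  show "honest R" unfolding honest_def
  proof (intro allI impI)
    fix i j assume "i < length R" "j < length R" "i \<noteq> j"
    hence "R ! i \<noteq> R ! j" "R ! i \<in> set R" "R ! j \<in> set R" using h by (auto simp: nth_eq_iff_index_eq)
    thus "\<not> proportional (snd (R ! i)) (snd (R ! j))" using h unfolding nonprop_def by blast
  qed
qed

lemma proper_perm: assumes "mset R = mset S" shows "proper R \<longleftrightarrow> proper S"
proof -
  have "distinct R \<longleftrightarrow> distinct S" "set R = set S"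
    using mset_eq_imp_distinct_iff[OF assms] mset_eq_setD[OF assms] by auto
  thus ?thesis unfolding proper_def honest_iff_pairwise by simp
qed

lemma badge_Cons:
  "badge (t # R) = ((if fst t > 0 then 1 else 0) + fst (badge R), (if fst t < 0 then 1 else 0) + snd (badge R))"
  unfolding badge_def by simp

lemma badge_perm: assumes "mset R = mset S" shows "badge R = badge S"
proof -
  have "length (filter P R) = length (filter P S)" for P
    using arg_cong[OF assms, of "\<lambda>M. size (filter_mset P M)"] by (simp flip: mset_filter)
  thus ?thesis unfolding badge_def by simp
qed

lemma badge_le_refl: "badge_le u u"
  by (simp add: badge_le_def)

lemma badge_le_trans: "badge_le u v \<Longrightarrow> badge_le v w \<Longrightarrow> badge_le u w"
  unfolding badge_le_def by auto

lemma badge_le_antisym: "badge_le u v \<Longrightarrow> badge_le v u \<Longrightarrow> u = v"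
  unfolding badge_le_def by (simp add: prod_eq_iff)

lemma badge_total:
  assumes "is_representation p R"
  shows "fst (badge R) + snd (badge R) = length R"
proof -
  have "filter (\<lambda>t. fst t < 0) R = filter (\<lambda>t. \<not> fst t > 0) R"
    using assms unfolding is_representation_def by (intro filter_cong) auto
  thus ?thesis unfolding badge_def using sum_length_filter_compl[of "\<lambda>t. fst t > 0" R] by simp
qed

lemma not_sorted_wrt_split:
  "\<not> sorted_wrt P R \<Longrightarrow> \<exists>xs u ys v zs. R = xs @ u # ys @ v # zs \<and> \<not> P u v"
proof (induction R)
  case (Cons x R)
  show ?case
  proof (cases "\<forall>y\<in>set R. P x y")
    case True
    then obtain xs u ys v zs where "R = xs @ u # ys @ v # zs" "\<not> P u v" using Cons by auto
    thus ?thesis by (intro exI[of _ "x # xs"]) auto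
  next
    case False
    then obtain y ys zs where "R = ys @ y # zs" "\<not> P x y" by (metis split_list)
    thus ?thesis by (intro exI[of _ "[]"]) auto
  qed
qed simp

lemma powsum_drop_trivial:
  assumes "fst t = 0 \<or> snd t = (0, 0)"
  shows "powsum (t # R) = powsum R"
  using assms by (cases t) (auto simp: fun_eq_iff)

text \<open>Two terms with proportional linear forms combine into one term, and the sign of
  the combined weight is the sign of one of the two original weights.\<close>
lemma powsum_merge_pair:
  assumes "proportional (snd u) (snd v)" "snd u \<noteq> (0, 0)"
  obtains l where "powsum (u # v # R) = powsum ((l, snd u) # R)"
    "badge_le (badge ((l, snd u) # R)) (badge (u # v # R))"
proof -
  obtain l1 a1 b1 l2 a2 b2 where uv: "u = (l1, a1, b1)" "v = (l2, a2, b2)" by (cases u, cases v) auto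
  obtain c where c: "a2 = c * a1" "b2 = c * b1"
  proof (cases "a1 = 0")
    case True
    thus ?thesis using assms that[of "b2 / b1"] by (auto simp: uv proportional_def)
  next
    case False
    thus ?thesis using assms that[of "a2 / a1"] by (auto simp: uv proportional_def field_simps)
  qed
  have "(a2 * x + b2 * y) ^ 4 = c ^ 4 * (a1 * x + b1 * y) ^ 4" for x y
    unfolding c by (simp add: power_mult_distrib[symmetric] algebra_simps)
  hence "powsum (u # v # R) = powsum ((l1 + l2 * c ^ 4, snd u) # R)"
    by (simp add: uv fun_eq_iff algebra_simps)
  moreover have "badge_le (badge ((l1 + l2 * c ^ 4, snd u) # R)) (badge (u # v # R))"
  proof -
    have "c ^ 4 \<ge> 0" by (simp add: zero_le_even_power)
    hence "l1 + l2 * c ^ 4 > 0 \<longrightarrow> l1 > 0 \<or> l2 > 0" "l1 + l2 * c ^ 4 < 0 \<longrightarrow> l1 < 0 \<or> l2 < 0"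
      by (metis add_nonpos_nonpos mult_nonpos_nonneg not_le, metis add_nonneg_nonneg zero_le_mult_iff not_le)
    thus ?thesis unfolding badge_le_def by (auto simp: badge_Cons uv)
  qed
  ultimately show ?thesis by (rule that)
qed

lemma shorten_improper:
  assumes "\<not> (sorted_wrt nonprop R \<and> (\<forall>t\<in>set R. fst t \<noteq> 0 \<and> snd t \<noteq> (0, 0)))"
  shows "\<exists>S. powsum S = powsum R \<and> badge_le (badge S) (badge R) \<and> length S < length R"
proof (cases "\<exists>t\<in>set R. fst t = 0 \<or> snd t = (0, 0)")
  case True
  then obtain t where t: "t \<in> set R" "fst t = 0 \<or> snd t = (0, 0)" by blast
  then obtain xs zs where R: "R = xs @ t # zs" by (meson split_list)
  have perm: "mset R = mset (t # xs @ zs)" by (simp add: R)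
  have "powsum (xs @ zs) = powsum R" using powsum_perm[OF perm] powsum_drop_trivial[OF t(2)] by simp
  moreover have "badge_le (badge (xs @ zs)) (badge R)"
    unfolding badge_perm[OF perm] by (simp add: badge_Cons badge_le_def)
  ultimately show ?thesis using R by (intro exI[of _ "xs @ zs"]) simp
next
  case False
  hence "\<not> sorted_wrt nonprop R" using assms by auto
  then obtain xs u ys v zs where R: "R = xs @ u # ys @ v # zs" and "\<not> nonprop u v"
    using not_sorted_wrt_split by blast
  hence "proportional (snd u) (snd v)" "snd u \<noteq> (0, 0)" using False by (auto simp: nonprop_def)
  then obtain l where l: "powsum (u # v # xs @ ys @ zs) = powsum ((l, snd u) # xs @ ys @ zs)"
    "badge_le (badge ((l, snd u) # xs @ ys @ zs)) (badge (u # v # xs @ ys @ zs))"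
    by (rule powsum_merge_pair)
  have perm: "mset R = mset (u # v # xs @ ys @ zs)" by (simp add: R)
  show ?thesis using l powsum_perm[OF perm] badge_perm[OF perm] R
    by (intro exI[of _ "(l, snd u) # xs @ ys @ zs"]) simp
qed

lemma proper_representation:
  "\<exists>R'. is_representation (powsum R) R' \<and> proper R' \<and> badge_le (badge R') (badge R) \<and> length R' \<le> length R"
proof (induction "length R" arbitrary: R rule: less_induct)
  case less
  show ?case
  proof (cases "sorted_wrt nonprop R \<and> (\<forall>t\<in>set R. fst t \<noteq> 0 \<and> snd t \<noteq> (0, 0))")
    case True
    thus ?thesis by (auto simp: is_representation_iff proper_def honest_sorted badge_le_refl)
  next
    case False
    then obtain S where S: "powsum S = powsum R" "badge_le (badge S) (badge R)" "length S < length R"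
      using shorten_improper by blast
    then obtain R' where "is_representation (powsum S) R'" "proper R'" "badge_le (badge R') (badge S)"
      "length R' \<le> length S" using less by blast
    thus ?thesis using S by (intro exI[of _ R']) (auto intro: badge_le_trans)
  qed
qed

text \<open>The apolar quadratic and the exchange lemma.\<close>

lemma proper_vanishing:
  assumes "proper T" "n < length T" "hform n f" "\<forall>t\<in>set T. ev f (snd t) = 0"
  shows "f a b = 0"
proof -
  define ts where "ts = map snd (take (Suc n) T)"
  have "sorted_wrt nonprop (take (Suc n) T @ drop (Suc n) T)"
    using assms(1) by (simp add: proper_def honest_sorted)
  hence "sorted_wrt (\<lambda>u v. \<not> proportional u v) ts"
    unfolding ts_def sorted_wrt_append by (simp add: sorted_wrt_map nonprop_def[abs_def])
  moreover have "\<forall>t\<in>set ts. t \<noteq> (0, 0) \<and> ev f t = 0"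
    using assms(1,4) set_take_subset[of "Suc n" T] unfolding ts_def proper_def by auto
  moreover have "length ts = Suc n" using assms(2) by (simp add: ts_def)
  ultimately show ?thesis using hform_vanishing[OF assms(3)] by blast
qed

lemma wsum_nonneg:
  assumes "\<And>a b. f a b \<ge> 0" "\<forall>t\<in>set T. fst t < 0 \<longrightarrow> ev f (snd t) = 0"
  shows "wsum T f \<ge> 0"
  using assms(2)
proof (induction T)
  case (Cons t T)
  have "fst t * ev f (snd t) \<ge> 0"
    using Cons.prems assms(1)[of "fst (snd t)" "snd (snd t)"] by (cases "fst t < 0") auto
  thus ?case using Cons by simp
qed simp

lemma wsum_pos:
  assumes "\<And>a b. f a b \<ge> 0" "\<forall>t\<in>set T. fst t < 0 \<longrightarrow> ev f (snd t) = 0"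
    and "x \<in> set T" "fst x > 0" "ev f (snd x) > 0"
  shows "wsum T f > 0"
  using assms(2,3)
proof (induction T)
  case (Cons t T)
  have head: "fst t * ev f (snd t) \<ge> 0"
    using Cons.prems(1) assms(1)[of "fst (snd t)" "snd (snd t)"] by (cases "fst t < 0") auto
  show ?case
  proof (cases "x = t")
    case True
    have "wsum T f \<ge> 0" using Cons.prems(1) assms(1) wsum_nonneg by simp
    thus ?thesis using True assms(4,5) by (simp add: add_pos_nonneg)
  next
    case False
    thus ?thesis using Cons head by simp
  qed
qed simp

lemma wsum_eq_0_imp_zero:
  assumes "\<forall>t\<in>set T. fst t > 0" "\<And>a b. f a b \<ge> 0" "wsum T f = 0" "t \<in> set T"
  shows "ev f (snd t) = 0"
  using assms(1,3,4)
proof (induction T)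
  case (Cons x T)
  have "fst x * ev f (snd x) \<ge> 0" using Cons.prems(1) assms(2) by simp
  moreover have "wsum T f \<ge> 0" using Cons.prems(1) assms(2) by (intro wsum_nonneg) auto
  moreover have "fst x * ev f (snd x) + wsum T f = 0" using Cons.prems(2) by simp
  ultimately have "fst x * ev f (snd x) = 0" "wsum T f = 0" by linarith+
  moreover have "fst x > 0" using Cons.prems(1) by simp
  ultimately show ?case using Cons by auto
qed simp

lemma homogeneous_system_2x3:
  fixes A0 A1 A2 B0 B1 B2 :: real
  obtains g0 g1 g2 where "(g0, g1, g2) \<noteq> (0, 0, 0)"
    "A0 * g0 + A1 * g1 + A2 * g2 = 0" "B0 * g0 + B1 * g1 + B2 * g2 = 0"
proof -
  define c0 c1 c2 where "c0 = A1 * B2 - A2 * B1" and "c1 = A2 * B0 - A0 * B2" and "c2 = A0 * B1 - A1 * B0"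
  have single: "\<exists>g0 g1 g2. (g0, g1, g2) \<noteq> (0, 0, 0) \<and> X0 * g0 + X1 * g1 + X2 * g2 = 0" for X0 X1 X2 :: real
  proof (cases "X0 = 0 \<and> X1 = 0")
    case True
    thus ?thesis by (intro exI[of _ 1] exI[of _ 0]) auto
  next
    case False
    thus ?thesis by (intro exI[of _ X1] exI[of _ "- X0"] exI[of _ 0]) (auto simp: algebra_simps)
  qed
  show ?thesis
  proof (cases "(c0, c1, c2) = (0, 0, 0)")
    case False
    thus ?thesis using that[of c0 c1 c2] by (simp add: c0_def c1_def c2_def algebra_simps)
  next
    case True
    show ?thesis
    proof (cases "A0 = 0 \<and> A1 = 0 \<and> A2 = 0")
      case True
      thus ?thesis using single[of B0 B1 B2] that by auto
    next
      case False
      obtain g0 g1 g2 where g: "(g0, g1, g2) \<noteq> (0, 0, 0)" "A0 * g0 + A1 * g1 + A2 * g2 = 0"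
        using single[of A0 A1 A2] by blast
      text \<open>B is a multiple of A, as their cross product (c0, c1, c2) vanishes.\<close>
      have "A0 * (B0 * g0 + B1 * g1 + B2 * g2) = B0 * (A0 * g0 + A1 * g1 + A2 * g2) + c2 * g1 - c1 * g2"
        "A1 * (B0 * g0 + B1 * g1 + B2 * g2) = B1 * (A0 * g0 + A1 * g1 + A2 * g2) - c2 * g0 + c0 * g2"
        "A2 * (B0 * g0 + B1 * g1 + B2 * g2) = B2 * (A0 * g0 + A1 * g1 + A2 * g2) + c1 * g0 - c0 * g1"
        unfolding c0_def c1_def c2_def by (simp_all add: algebra_simps)
      hence "B0 * g0 + B1 * g1 + B2 * g2 = 0" using g(2) False True by auto
      thus ?thesis using g that by blast
    qed
  qed
qed

lemma apolar_quadratic: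
  obtains g0 g1 g2 where "(g0, g1, g2) \<noteq> (0, 0, 0)"
    "\<And>l. hform 1 l \<Longrightarrow> wsum T (\<lambda>a b. m a b * (g2 * a ^ 2 + g1 * a * b + g0 * b ^ 2) * l a b) = 0"
proof -
  define A0 A1 A2 where "A0 = wsum T (\<lambda>a b. m a b * b ^ 2 * a)"
    and "A1 = wsum T (\<lambda>a b. m a b * (a * b) * a)" and "A2 = wsum T (\<lambda>a b. m a b * a ^ 2 * a)"
  define B0 B1 B2 where "B0 = wsum T (\<lambda>a b. m a b * b ^ 2 * b)"
    and "B1 = wsum T (\<lambda>a b. m a b * (a * b) * b)" and "B2 = wsum T (\<lambda>a b. m a b * a ^ 2 * b)"
  obtain g0 g1 g2 where g: "(g0, g1, g2) \<noteq> (0, 0, 0)"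
    "A0 * g0 + A1 * g1 + A2 * g2 = 0" "B0 * g0 + B1 * g1 + B2 * g2 = 0"
    by (rule homogeneous_system_2x3)
  have "wsum T (\<lambda>a b. m a b * (g2 * a ^ 2 + g1 * a * b + g0 * b ^ 2) * l a b) = 0" if lin: "hform 1 l" for l
  proof -
    obtain r1 r2 where l: "\<And>a b. l a b = r1 * a + r2 * b" using hform1_E[OF lin] by blast
    have "wsum T (\<lambda>a b. m a b * (g2 * a ^ 2 + g1 * a * b + g0 * b ^ 2) * l a b) =
      wsum T (\<lambda>a b. r1 * (g0 * (m a b * b ^ 2 * a) + g1 * (m a b * (a * b) * a) + g2 * (m a b * a ^ 2 * a))
        + r2 * (g0 * (m a b * b ^ 2 * b) + g1 * (m a b * (a * b) * b) + g2 * (m a b * a ^ 2 * b)))"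
      by (rule arg_cong[where f = "wsum T"]) (simp add: fun_eq_iff l power2_eq_square algebra_simps)
    also have "\<dots> = r1 * (g0 * A0 + g1 * A1 + g2 * A2) + r2 * (g0 * B0 + g1 * B1 + g2 * B2)"
      unfolding A0_def A1_def A2_def B0_def B1_def B2_def by (simp only: wsum_add wsum_smult)
    finally show ?thesis using g(2,3) by (simp add: mult.commute)
  qed
  thus ?thesis using g(1) that by blast
qed

lemma quadratic_semidefinite:
  fixes g0 g1 g2 :: real
  assumes "g1 ^ 2 - 4 * g0 * g2 \<le> 0"
  shows "(\<forall>a b. g2 * a ^ 2 + g1 * a * b + g0 * b ^ 2 \<ge> 0) \<or> (\<forall>a b. g2 * a ^ 2 + g1 * a * b + g0 * b ^ 2 \<le> 0)"
proof (cases "g2 = 0")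
  case True
  hence "g1 = 0" using assms by (simp add: power2_less_eq_zero_iff)
  thus ?thesis using True by (cases "g0 \<ge> 0") (auto intro: mult_nonpos_nonneg)
next
  case False
  have square: "4 * (g2 * (g2 * a ^ 2 + g1 * a * b + g0 * b ^ 2))
      = (2 * g2 * a + g1 * b) ^ 2 + (4 * g0 * g2 - g1 ^ 2) * b ^ 2" for a b
    by (simp add: power2_eq_square algebra_simps)
  have nonneg: "(2 * g2 * a + g1 * b) ^ 2 + (4 * g0 * g2 - g1 ^ 2) * b ^ 2 \<ge> 0" for a b
    using assms by (intro add_nonneg_nonneg) auto
  have "0 \<le> g2 * (g2 * a ^ 2 + g1 * a * b + g0 * b ^ 2)" for a b
    using square[of a b] nonneg[of a b] by linarith
  thus ?thesis using False by (cases "g2 > 0") (auto simp: zero_le_mult_iff)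
qed

lemma quadratic_two_roots:
  fixes g0 g1 g2 :: real
  assumes "g1 ^ 2 - 4 * g0 * g2 > 0"
    and G: "\<And>a b. G a b = g2 * a ^ 2 + g1 * a * b + g0 * b ^ 2"
  obtains u v where "u \<noteq> (0, 0)" "v \<noteq> (0, 0)" "\<not> proportional u v" "ev G u = 0" "ev G v = 0"
proof (cases "g2 = 0")
  case True
  hence "g1 \<noteq> 0" using assms by auto
  show ?thesis by (rule that[of "(1, 0)" "(- g0, g1)"]) (use True \<open>g1 \<noteq> 0\<close> in \<open>auto simp: G proportional_def power2_eq_square\<close>)
next
  case False
  define r where "r = sqrt (g1 ^ 2 - 4 * g0 * g2)"
  have r: "r > 0" "r ^ 2 = g1 ^ 2 - 4 * g0 * g2" using assms by (auto simp: r_def)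
  have root: "G (- g1 + e * r) (2 * g2) = 0" if "e ^ 2 = 1" for e
  proof -
    have "G (- g1 + e * r) (2 * g2) = g2 * (e ^ 2 * r ^ 2 - (g1 ^ 2 - 4 * g0 * g2))"
      by (simp add: G power2_eq_square algebra_simps)
    thus ?thesis using that r(2) by simp
  qed
  show ?thesis
  proof (rule that[of "(- g1 + r, 2 * g2)" "(- g1 + (- 1) * r, 2 * g2)"])
    show "\<not> proportional (- g1 + r, 2 * g2) (- g1 + (- 1) * r, 2 * g2)"
      using False r(1) by (simp add: proportional_def algebra_simps)
  qed (use False root[of 1] root[of "- 1"] in auto)
qed

lemma hform2_two_roots:
  assumes "hform 2 G" "u \<noteq> (0, 0)" "v \<noteq> (0, 0)" "\<not> proportional u v" "ev G u = 0" "ev G v = 0"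
  obtains c where "\<And>a b. G a b = c * (line_form u a b * line_form v a b)"
proof -
  obtain g where g: "hform 0 g" "\<forall>a b. G a b = (\<Prod>t\<leftarrow>[u, v]. line_form t a b) * g a b"
    using hform_factor_roots[of "[u, v]" 0 G] assms by (auto simp: numeral_2_eq_2)
  obtain c where "\<And>a b. g a b = c" using hform0_E[OF g(1)] by blast
  thus ?thesis using g(2) that[of c] by (simp add: mult_ac)
qed

text \<open>The apolar quadratic of a positive combination of at least three point evaluations
  is indefinite: otherwise it would vanish at all the points.\<close>
lemma apolar_quadratic_indefinite:
  assumes pos: "\<forall>t\<in>set T. fst t > 0" and T: "proper T" "length T \<ge> 3"
    and s: "\<forall>t\<in>set T. \<not> proportional s (snd t)"
    and G: "G = (\<lambda>a b. g2 * a ^ 2 + g1 * a * b + g0 * b ^ 2)" "(g0, g1, g2) \<noteq> (0, 0, 0)"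
    and apolar: "\<And>l. hform 1 l \<Longrightarrow> wsum T (\<lambda>a b. line_form s a b * G a b * l a b) = 0"
  shows "g1 ^ 2 - 4 * g0 * g2 > 0"
proof (rule ccontr)
  assume "\<not> ?thesis"
  hence "(\<forall>a b. G a b \<ge> 0) \<or> (\<forall>a b. G a b \<le> 0)"
    using quadratic_semidefinite[of g1 g0 g2] by (simp add: G(1))
  then obtain e :: real where e: "e \<noteq> 0" "\<And>a b. e * G a b \<ge> 0"
    by (elim disjE) (rule that[of 1], auto, rule that[of "- 1"], auto)
  have zero: "wsum T (\<lambda>a b. e * G a b * line_form s a b ^ 2) = 0"
    using apolar[OF hform_line_form[of s]] wsum_smult[of T e] by (simp add: power2_eq_square mult_ac)
  have nonneg: "0 \<le> e * G a b * line_form s a b ^ 2" for a b using e(2) by simp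
  have "ev G (snd t) = 0" if "t \<in> set T" for t
    using wsum_eq_0_imp_zero[OF pos nonneg zero that] that e(1) s by (simp add: line_form_eq_0_iff)
  moreover have "hform 2 G" unfolding G(1) by (rule hform_quadratic)
  ultimately have "G a b = 0" for a b using proper_vanishing[OF T(1), of 2 G] T(2) by auto
  from this[of 1 0] this[of 0 1] this[of 1 1] show False using G by simp
qed

text \<open>Neither zero of the apolar quadratic is proportional to s; otherwise the apolar
  functional would annihilate a square that is positive at all but one point.\<close>
lemma apolar_root_nonproportional:
  assumes pos: "\<forall>t\<in>set T. fst t > 0" and T: "proper T" "length T \<ge> 2"
    and s: "s \<noteq> (0, 0)" "\<forall>t\<in>set T. \<not> proportional s (snd t)"
    and uv: "u \<noteq> (0, 0)" "v \<noteq> (0, 0)" "c \<noteq> 0"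
    and apolar: "\<And>l. hform 1 l \<Longrightarrow>
      wsum T (\<lambda>a b. line_form s a b * (c * (line_form u a b * line_form v a b)) * l a b) = 0"
  shows "\<not> proportional s u"
proof
  assume "proportional s u"
  then obtain k where k: "\<And>a b. line_form u a b = k * line_form s a b"
    using line_form_proportional[OF s(1)] by blast
  have "k \<noteq> 0"
  proof
    assume "k = 0"
    hence "line_form u a b = 0" for a b using k by simp
    thus False using line_form_identically_zero uv(1) by blast
  qed
  have "(\<lambda>a b. line_form s a b * (c * (line_form u a b * line_form v a b)) * line_form v a b)
      = (\<lambda>a b. (c * k) * (line_form s a b * line_form v a b) ^ 2)"
    unfolding fun_eq_iff k power2_eq_square by (simp add: ac_simps)
  hence "(c * k) * wsum T (\<lambda>a b. (line_form s a b * line_form v a b) ^ 2) = 0"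
    using apolar[OF hform_line_form[of v]] by (simp only: wsum_smult)
  hence zero: "wsum T (\<lambda>a b. (line_form s a b * line_form v a b) ^ 2) = 0"
    using uv(3) \<open>k \<noteq> 0\<close> by simp
  have "ev (line_form v) (snd t) = 0" if "t \<in> set T" for t
  proof -
    have "(ev (line_form s) (snd t) * ev (line_form v) (snd t)) ^ 2 = 0"
      using wsum_eq_0_imp_zero[OF pos _ zero that] by simp
    thus ?thesis using s(2) that by (simp add: line_form_eq_0_iff)
  qed
  hence "line_form v a b = 0" for a b
    using proper_vanishing[OF T(1), of 1 "line_form v"] T(2) hform_line_form by auto
  thus False using line_form_identically_zero uv(2) by blast
qed

text \<open>The square of the product of the linear forms of x and y, normalised to the value 1
  at w; it serves as interpolation basis at the three points w, x, y.\<close>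
definition basis_sq :: "real \<times> real \<Rightarrow> real \<times> real \<Rightarrow> real \<times> real \<Rightarrow> real \<Rightarrow> real \<Rightarrow> real" where
  "basis_sq w x y a b = (line_form x a b * line_form y a b / (ev (line_form x) w * ev (line_form y) w)) ^ 2"

lemma hform_basis_sq: "hform 4 (basis_sq w x y)"
proof -
  have "hform (2 * (1 + 1)) (\<lambda>a b. ((1 / (ev (line_form x) w * ev (line_form y) w))
      * (line_form x a b * line_form y a b)) ^ 2)"
    by (intro hform_square hform_smult hform_mult hform_line_form)
  hence "hform 4 (\<lambda>a b. ((1 / (ev (line_form x) w * ev (line_form y) w))
      * (line_form x a b * line_form y a b)) ^ 2)" by simp
  thus ?thesis by (rule hform_cong) (simp add: basis_sq_def)
qed

lemma basis_sq_at:
  "\<not> proportional x w \<Longrightarrow> \<not> proportional y w \<Longrightarrow> ev (basis_sq w x y) w = 1"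
  unfolding basis_sq_def by (simp add: line_form_eq_0_iff)

lemma basis_sq_zero: "ev (basis_sq w x y) x = 0" "ev (basis_sq w x y) y = 0"
  unfolding basis_sq_def by (simp_all add: line_form_def)

lemma basis_sq_nonneg: "basis_sq w x y a b \<ge> 0"
  by (simp add: basis_sq_def)

lemma quartic_interpolation:
  assumes f: "hform 4 f" and pts: "s \<noteq> (0, 0)" "u \<noteq> (0, 0)" "v \<noteq> (0, 0)"
    "\<not> proportional s u" "\<not> proportional s v" "\<not> proportional u v"
  obtains H where "hform 1 H"
    "\<And>a b. f a b = ev f s * basis_sq s u v a b + ev f u * basis_sq u s v a b + ev f v * basis_sq v s u a b
       + line_form s a b * line_form u a b * line_form v a b * H a b"
proof -
  define F where "F = (\<lambda>a b. f a b -
    (ev f s * basis_sq s u v a b + ev f u * basis_sq u s v a b + ev f v * basis_sq v s u a b))"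
  have "hform 4 F" unfolding F_def by (intro hform_diff hform_add hform_smult hform_basis_sq f)
  hence "hform (length [s, u, v] + 1) F" by (simp add: numeral_eq_Suc)
  moreover have "sorted_wrt (\<lambda>x y. \<not> proportional x y) [s, u, v]" using pts(4-6) by simp
  moreover have "ev F s = 0" "ev F u = 0" "ev F v = 0"
    using pts(4-6) proportional_sym[of s u] proportional_sym[of s v] proportional_sym[of u v]
    by (simp_all add: F_def basis_sq_at basis_sq_zero)
  ultimately obtain H where H: "hform 1 H" "\<forall>a b. F a b = (\<Prod>t\<leftarrow>[s, u, v]. line_form t a b) * H a b"
    using hform_factor_roots[of "[s, u, v]" 1 F] pts(1-3) by auto
  show ?thesis
  proof (rule that[OF H(1)])
    fix a b
    have "F a b = line_form s a b * line_form u a b * line_form v a b * H a b"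
      using H(2) by (simp add: mult.assoc)
    thus "f a b = ev f s * basis_sq s u v a b + ev f u * basis_sq u s v a b + ev f v * basis_sq v s u a b
       + line_form s a b * line_form u a b * line_form v a b * H a b"
      unfolding F_def by linarith
  qed
qed

text \<open>The forms u, v
  are the zeros of the apolar quadratic.\<close>
lemma apolar_triple:
  assumes pos: "\<forall>t\<in>set T. fst t > 0" and T: "proper T" "length T \<ge> 3"
    and s: "s \<noteq> (0, 0)" "\<forall>t\<in>set T. \<not> proportional s (snd t)"
  shows "\<exists>u v. u \<noteq> (0, 0) \<and> v \<noteq> (0, 0) \<and> \<not> proportional s u \<and> \<not> proportional s v \<and> \<not> proportional u v
    \<and> (\<forall>l. hform 1 l \<longrightarrow> wsum T (\<lambda>a b. line_form s a b * line_form u a b * line_form v a b * l a b) = 0)"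
proof -
  obtain g0 g1 g2 where g: "(g0, g1, g2) \<noteq> (0, 0, 0)" and apolar:
    "\<And>l. hform 1 l \<Longrightarrow> wsum T (\<lambda>a b. line_form s a b * (g2 * a ^ 2 + g1 * a * b + g0 * b ^ 2) * l a b) = 0"
    using apolar_quadratic[of T "line_form s"] by blast
  define G where "G = (\<lambda>a b::real. g2 * a ^ 2 + g1 * a * b + g0 * b ^ 2)"
  have apolarG: "\<And>l. hform 1 l \<Longrightarrow> wsum T (\<lambda>a b. line_form s a b * G a b * l a b) = 0"
    using apolar by (simp add: G_def)
  have "g1 ^ 2 - 4 * g0 * g2 > 0" by (rule apolar_quadratic_indefinite[OF pos T s(2) G_def g apolarG])
  moreover have "G a b = g2 * a ^ 2 + g1 * a * b + g0 * b ^ 2" for a b by (simp add: G_def)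
  ultimately obtain u v where uv: "u \<noteq> (0, 0)" "v \<noteq> (0, 0)" "\<not> proportional u v" "ev G u = 0" "ev G v = 0"
    using quadratic_two_roots by blast
  have "hform 2 G" unfolding G_def by (rule hform_quadratic)
  then obtain c where c: "\<And>a b. G a b = c * (line_form u a b * line_form v a b)"
    using hform2_two_roots[OF _ uv] by blast
  have "c \<noteq> 0" using c[of 1 0] c[of 0 1] c[of 1 1] g by (auto simp: G_def)
  have "wsum T (\<lambda>a b. line_form s a b * (c * (line_form u a b * line_form v a b)) * l a b) = 0"
    "wsum T (\<lambda>a b. line_form s a b * (c * (line_form v a b * line_form u a b)) * l a b) = 0"
    if "hform 1 l" for l
    using apolarG[OF that] unfolding c by (simp_all add: ac_simps)
  hence "\<not> proportional s u" "\<not> proportional s v"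
    using apolar_root_nonproportional[OF pos T(1) _ s] uv(1,2) \<open>c \<noteq> 0\<close> T(2) by auto
  moreover have "wsum T (\<lambda>a b. line_form s a b * line_form u a b * line_form v a b * l a b) = 0"
    if "hform 1 l" for l
  proof -
    have "(\<lambda>a b. line_form s a b * line_form u a b * line_form v a b * l a b)
        = (\<lambda>a b. (1 / c) * (line_form s a b * G a b * l a b))"
      using \<open>c \<noteq> 0\<close> by (simp add: fun_eq_iff c)
    thus ?thesis using apolarG[OF that] by (simp only: wsum_smult)
  qed
  ultimately show ?thesis using uv(1-3) by blast
qed

lemma positive_exchange:
  assumes pos: "\<forall>t\<in>set T. fst t > 0" and T: "proper T" "length T \<ge> 3"
    and s: "s \<noteq> (0, 0)" "\<forall>t\<in>set T. \<not> proportional s (snd t)"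
  shows "\<exists>u v. \<forall>f. hform 4 f \<longrightarrow> wsum T f =
    ev f s * wsum T (basis_sq s u v) + ev f u * wsum T (basis_sq u s v) + ev f v * wsum T (basis_sq v s u)"
proof -
  obtain u v where uv: "u \<noteq> (0, 0)" "v \<noteq> (0, 0)" "\<not> proportional s u" "\<not> proportional s v"
    "\<not> proportional u v" and apolar:
    "\<forall>l. hform 1 l \<longrightarrow> wsum T (\<lambda>a b. line_form s a b * line_form u a b * line_form v a b * l a b) = 0"
    using apolar_triple[OF assms] by blast
  show ?thesis
  proof (intro exI allI impI)
    fix f assume "hform 4 f"
    then obtain H where H: "hform 1 H" "\<And>a b. f a b = ev f s * basis_sq s u v a b
      + ev f u * basis_sq u s v a b + ev f v * basis_sq v s u a b
      + line_form s a b * line_form u a b * line_form v a b * H a b"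
      using quartic_interpolation[OF _ s(1) uv] by blast
    have "wsum T f = wsum T (\<lambda>a b. ev f s * basis_sq s u v a b + ev f u * basis_sq u s v a b
      + ev f v * basis_sq v s u a b + line_form s a b * line_form u a b * line_form v a b * H a b)"
      by (rule arg_cong[where f = "wsum T"]) (intro ext H(2))
    also have "\<dots> = ev f s * wsum T (basis_sq s u v) + ev f u * wsum T (basis_sq u s v)
      + ev f v * wsum T (basis_sq v s u) + 0"
      by (simp only: wsum_add wsum_smult apolar[rule_format, OF H(1)])
    finally show "wsum T f = ev f s * wsum T (basis_sq s u v) + ev f u * wsum T (basis_sq u s v)
      + ev f v * wsum T (basis_sq v s u)" by simp
  qed
qed

text \<open>Shortening representations.\<close>

lemma three_positive_terms:
  assumes "fst (badge R) \<ge> 3" "length R \<ge> 4"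
  shows "\<exists>x1 x2 x3 y rest. mset R = mset (x1 # x2 # x3 # y # rest) \<and> fst x1 > 0 \<and> fst x2 > 0 \<and> fst x3 > 0"
proof -
  define Ps Ns where "Ps = filter (\<lambda>t. fst t > 0) R" and "Ns = filter (\<lambda>t. \<not> fst t > 0) R"
  have R_split: "mset R = mset (Ps @ Ns)" by (simp add: Ps_def Ns_def)
  have "length Ps \<ge> 3" using assms(1) by (simp add: Ps_def badge_def)
  then obtain x1 x2 x3 ps where Ps: "Ps = x1 # x2 # x3 # ps"
    by (auto simp: Suc_le_length_iff numeral_3_eq_3)
  have "\<forall>t\<in>set Ps. fst t > 0" by (simp add: Ps_def)
  hence pos: "fst x1 > 0" "fst x2 > 0" "fst x3 > 0" by (simp_all add: Ps)
  show ?thesis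
  proof (cases ps)
    case (Cons y ps')
    thus ?thesis using pos R_split by (intro exI[of _ x1] exI[of _ x2] exI[of _ x3] exI[of _ y] exI[of _ "ps' @ Ns"]) (simp add: Ps)
  next
    case Nil
    hence "Ns \<noteq> []" using assms(2) mset_eq_length[OF R_split] by (auto simp: Ps)
    then obtain y ns where "Ns = y # ns" by (cases Ns) auto
    thus ?thesis using pos R_split Nil by (intro exI[of _ x1] exI[of _ x2] exI[of _ x3] exI[of _ y] exI[of _ ns]) (simp add: Ps)
  qed
qed

text \<open>Three positive terms of a proper representation with at least four terms can be
  replaced by three terms, one of which merges with a fourth term; this shortens the
  representation without increasing its badge.\<close>
lemma shorten_positive:
  assumes "proper R" "fst (badge R) \<ge> 3" "length R \<ge> 4"
  shows "\<exists>R'. powsum R' = powsum R \<and> badge_le (badge R') (badge R) \<and> length R' < length R"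
proof -
  obtain x1 x2 x3 y rest where L: "mset R = mset (x1 # x2 # x3 # y # rest)"
    and "fst x1 > 0" "fst x2 > 0" "fst x3 > 0"
    using three_positive_terms[OF assms(2,3)] by blast
  hence pos: "\<forall>t\<in>set [x1, x2, x3]. fst t > 0" by simp
  have "proper (x1 # x2 # x3 # y # rest)" using assms(1) proper_perm[OF L] by simp
  hence "sorted_wrt nonprop (x1 # x2 # x3 # y # rest)" "\<forall>t\<in>set (x1 # x2 # x3 # y # rest). snd t \<noteq> (0, 0)"
    by (simp_all add: proper_def honest_sorted)
  hence T: "proper [x1, x2, x3]" and s: "snd y \<noteq> (0, 0)"
    and "\<forall>t\<in>set [x1, x2, x3]. \<not> proportional (snd t) (snd y)"
    by (simp_all add: proper_def honest_sorted nonprop_def)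
  hence np: "\<forall>t\<in>set [x1, x2, x3]. \<not> proportional (snd y) (snd t)" using proportional_sym by blast
  have len: "length [x1, x2, x3] \<ge> 3" by simp
  obtain u v where uv: "\<forall>f. hform 4 f \<longrightarrow> wsum [x1, x2, x3] f = ev f (snd y) * wsum [x1, x2, x3] (basis_sq (snd y) u v)
    + ev f u * wsum [x1, x2, x3] (basis_sq u (snd y) v) + ev f v * wsum [x1, x2, x3] (basis_sq v (snd y) u)"
    using positive_exchange[OF pos T len s np] by blast
  define nt nu nv where "nt = wsum [x1, x2, x3] (basis_sq (snd y) u v)"
    and "nu = wsum [x1, x2, x3] (basis_sq u (snd y) v)" and "nv = wsum [x1, x2, x3] (basis_sq v (snd y) u)"
  have "nt \<ge> 0" "nu \<ge> 0" "nv \<ge> 0"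
    unfolding nt_def nu_def nv_def using pos by (auto intro!: wsum_nonneg simp: basis_sq_nonneg)
  define R' where "R' = (nt + fst y, snd y) # (nu, u) # (nv, v) # rest"
  have "powsum [x1, x2, x3] x z = powsum [(nt, snd y), (nu, u), (nv, v)] x z" for x z
    using uv[rule_format, OF hform_fourth_power[of x z]] by (simp add: powsum_eq_wsum nt_def nu_def nv_def mult_ac)
  hence "powsum R' = powsum (x1 # x2 # x3 # y # rest)"
    by (simp add: R'_def fun_eq_iff algebra_simps)
  moreover have "badge_le (badge R') (badge (x1 # x2 # x3 # y # rest))"
    using pos \<open>nt \<ge> 0\<close> \<open>nu \<ge> 0\<close> \<open>nv \<ge> 0\<close> by (auto simp: R'_def badge_Cons badge_le_def)
  moreover have "length R' < length (x1 # x2 # x3 # y # rest)" by (simp add: R'_def)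
  ultimately show ?thesis
    using powsum_perm[OF L] badge_perm[OF L] mset_eq_length[OF L] by (intro exI[of _ R']) simp
qed

text \<open>Changing the signs of all weights exchanges the two components of the badge; it
  reduces statements about negative terms to statements about positive ones.\<close>
definition negate :: "(real \<times> real \<times> real) list \<Rightarrow> (real \<times> real \<times> real) list" where
  "negate R = map (\<lambda>t. (- fst t, snd t)) R"

lemma powsum_negate: "powsum (negate R) x y = - powsum R x y"
  by (induction R) (auto simp: negate_def)

lemma badge_negate: "badge (negate R) = (snd (badge R), fst (badge R))"
  unfolding badge_def negate_def by (simp add: filter_map o_def)

lemma proper_negate: "proper (negate R) \<longleftrightarrow> proper R"
  by (simp add: negate_def proper_def honest_sorted sorted_wrt_map nonprop_def[abs_def])

lemma length_negate [simp]: "length (negate R) = length R"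
  by (simp add: negate_def)

lemma wsum_negate: "wsum (negate R) f = - wsum R f"
  by (induction R) (auto simp: negate_def)

lemma shorten:
  assumes "proper R" "fst (badge R) \<ge> 3 \<or> snd (badge R) \<ge> 3" "length R \<ge> 4"
  shows "\<exists>R'. powsum R' = powsum R \<and> badge_le (badge R') (badge R) \<and> length R' < length R"
  using assms(2)
proof
  assume "snd (badge R) \<ge> 3"
  then obtain R' where R': "powsum R' = powsum (negate R)" "badge_le (badge R') (badge (negate R))"
    "length R' < length (negate R)"
    using shorten_positive[of "negate R"] assms(1,3) by (auto simp: proper_negate badge_negate)
  have "powsum (negate R') = powsum R"
    using R'(1) by (simp add: fun_eq_iff powsum_negate)
  thus ?thesis using R'(2,3) by (intro exI[of _ "negate R'"]) (auto simp: badge_negate badge_le_def)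
qed (use shorten_positive assms in blast)

lemma reduce:
  assumes "proper R" "is_representation p R"
  shows "\<exists>R'. is_representation p R' \<and> proper R' \<and> badge_le (badge R') (badge R)
    \<and> (length R' \<le> 3 \<or> badge R' = (2, 2))"
  using assms
proof (induction "length R" arbitrary: R rule: less_induct)
  case less
  show ?case
  proof (cases "length R \<le> 3 \<or> badge R = (2, 2)")
    case True thus ?thesis using less.prems by (auto intro: badge_le_refl)
  next
    case False
    hence "fst (badge R) \<ge> 3 \<or> snd (badge R) \<ge> 3" "length R \<ge> 4"
      using badge_total[OF less.prems(2)] by (auto simp: prod_eq_iff)
    then obtain R1 where R1: "powsum R1 = powsum R" "badge_le (badge R1) (badge R)" "length R1 < length R"
      using shorten less.prems(1) by blast
    obtain R2 where R2: "is_representation (powsum R1) R2" "proper R2" "badge_le (badge R2) (badge R1)"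
      "length R2 \<le> length R1" using proper_representation by blast
    have "is_representation p R2" using R2(1) R1(1) less.prems(2) by (simp add: is_representation_iff)
    then obtain R' where "is_representation p R'" "proper R'" "badge_le (badge R') (badge R2)"
      "length R' \<le> 3 \<or> badge R' = (2, 2)"
      using less.hyps[of R2] R1(3) R2(2,4) by auto
    thus ?thesis using R1(2) R2(3) by (blast intro: badge_le_trans)
  qed
qed

text \<open>Representations with at most three terms have the least badge.\<close>

lemma sorted_wrt_symmetric:
  assumes "\<And>x y. P x y \<Longrightarrow> P y x" "sorted_wrt P xs" "x \<in> set xs" "y \<in> set xs" "x \<noteq> y"
  shows "P x y"
  using assms(2-5) by (induction xs) (auto intro: assms(1))

lemma sorted_nonproportional_distinct:
  "sorted_wrt (\<lambda>u v. \<not> proportional u v) ts \<Longrightarrow> distinct ts"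
  by (induction ts) (auto simp: proportional_refl)

lemma nonproportional_witness:
  assumes P: "sorted_wrt (\<lambda>u v. \<not> proportional u v) P" and "length Q < length P"
    and Q: "\<forall>q\<in>set Q. q \<noteq> (0, 0)"
  shows "\<exists>t\<in>set P. \<forall>q\<in>set Q. \<not> proportional t q"
proof (rule ccontr)
  assume "\<not> ?thesis"
  then obtain h where h: "\<And>t. t \<in> set P \<Longrightarrow> h t \<in> set Q \<and> proportional t (h t)" by metis
  have "inj_on h (set P)"
  proof (rule inj_onI)
    fix t t' assume tt: "t \<in> set P" "t' \<in> set P" "h t = h t'"
    hence "proportional t t'"
      using h Q proportional_trans[of "h t" t t'] proportional_sym by metis
    thus "t = t'" using sorted_wrt_symmetric[OF _ P tt(1,2)] proportional_sym by blast
  qed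
  hence "card (set P) \<le> card (set Q)" using h by (intro card_inj_on_le) auto
  also have "\<dots> \<le> length Q" by (rule card_length)
  finally show False
    using distinct_card[OF sorted_nonproportional_distinct[OF P]] assms(2) by simp
qed

lemma hform_prod_line_forms: "hform (length ts) (\<lambda>a b. \<Prod>t\<leftarrow>ts. line_form t a b)"
proof (induction ts)
  case Nil
  show ?case unfolding hform_def by (intro exI[of _ 1]) (simp add: homog_0)
next
  case (Cons t ts)
  show ?case using hform_mult[OF hform_line_form Cons.IH] by simp
qed

lemma separating_quadratic:
  assumes "length C \<le> 2" "t0 \<noteq> (0, 0)" "\<forall>c\<in>set C. \<not> proportional c t0"
  obtains g where "hform 2 g" "\<forall>c\<in>set C. ev g c = 0" "ev g t0 \<noteq> 0"
proof -
  define w where "w = (- snd t0, fst t0)"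
  have "line_form w (fst t0) (snd t0) = fst t0 ^ 2 + snd t0 ^ 2" by (simp add: w_def line_form_def power2_eq_square)
  hence "\<not> proportional w t0" using assms(2) by (simp add: line_form_eq_0_iff[symmetric] prod_eq_iff)
  define ts where "ts = C @ replicate (2 - length C) w"
  have "hform (length ts) (\<lambda>a b. \<Prod>t\<leftarrow>ts. line_form t a b)" by (rule hform_prod_line_forms)
  moreover have "length ts = 2" using assms(1) by (simp add: ts_def)
  moreover have "\<forall>c\<in>set C. ev (\<lambda>a b. \<Prod>t\<leftarrow>ts. line_form t a b) c = 0"
  proof
    fix c assume "c \<in> set C"
    hence "0 \<in> (\<lambda>t. line_form t (fst c) (snd c)) ` set ts" by (force simp: ts_def line_form_def)
    thus "ev (\<lambda>a b. \<Prod>t\<leftarrow>ts. line_form t a b) c = 0" by (simp add: prod_list_zero_iff)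
  qed
  moreover have "ev (\<lambda>a b. \<Prod>t\<leftarrow>ts. line_form t a b) t0 \<noteq> 0"
    using assms(3) \<open>\<not> proportional w t0\<close> by (auto simp: ts_def prod_list_zero_iff line_form_eq_0_iff)
  ultimately show ?thesis using that by auto
qed

text \<open>Sign test: if a quadratic form g vanishes at the points of negative weight of S
  and at the points of positive weight of R, but not at some point of positive weight of
  S, then the apolar values of g^2 under S and R have opposite signs, so S and R cannot
  represent the same form.\<close>
lemma separating_square:
  assumes g: "hform 2 g" "\<forall>t\<in>set S. fst t < 0 \<longrightarrow> ev g (snd t) = 0"
    "\<forall>t\<in>set R. fst t > 0 \<longrightarrow> ev g (snd t) = 0"
    and x0: "x0 \<in> set S" "fst x0 > 0" "ev g (snd x0) \<noteq> 0"
  shows "powsum S \<noteq> powsum R"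
proof
  assume "powsum S = powsum R"
  hence "wsum S (\<lambda>a b. g a b ^ 2) = wsum R (\<lambda>a b. g a b ^ 2)"
    using hform_square[OF g(1)] by (intro wsum_determined) simp_all
  moreover have "wsum S (\<lambda>a b. g a b ^ 2) > 0"
    using g(2) x0 by (intro wsum_pos[OF _ _ x0(1,2)]) auto
  moreover have "wsum (negate R) (\<lambda>a b. g a b ^ 2) \<ge> 0"
    using g(3) by (intro wsum_nonneg) (auto simp: negate_def)
  hence "wsum R (\<lambda>a b. g a b ^ 2) \<le> 0" by (simp add: wsum_negate)
  ultimately show False by simp
qed

text \<open>Otherwise a positive point of it is
  proportional to no positive point of the other, and a quadratic form vanishing at the
  remaining at most two points contradicts the sign test.\<close>
lemma short_representation_least_positive:
  assumes S: "proper S" "is_representation p S" "length S \<le> 3"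
    and R: "proper R" "is_representation p R"
  shows "fst (badge S) \<le> fst (badge R)"
proof (rule ccontr)
  assume contra: "\<not> ?thesis"
  define PS NS PR where "PS = map snd (filter (\<lambda>t. fst t > 0) S)"
    and "NS = map snd (filter (\<lambda>t. fst t < 0) S)" and "PR = map snd (filter (\<lambda>t. fst t > 0) R)"
  have fewer: "length PR < length PS" using contra by (simp add: PS_def PR_def badge_def)
  have "sorted_wrt nonprop S" using S(1) by (simp add: proper_def honest_sorted)
  hence "sorted_wrt (\<lambda>u v. \<not> proportional u v) PS"
    by (simp add: PS_def sorted_wrt_map sorted_wrt_filter nonprop_def[abs_def])
  moreover have "\<forall>q\<in>set PR. q \<noteq> (0, 0)" using R(1) by (auto simp: PR_def proper_def)
  ultimately obtain t0 where t0: "t0 \<in> set PS" "\<forall>q\<in>set PR. \<not> proportional t0 q"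
    using nonproportional_witness fewer by blast
  then obtain x0 where x0: "x0 \<in> set S" "fst x0 > 0" "snd x0 = t0" by (auto simp: PS_def)
  have "length PR + length NS \<le> 2"
    using fewer badge_total[OF S(2)] S(3) by (simp add: PS_def NS_def PR_def badge_def)
  moreover have "\<not> proportional c t0" if c: "c \<in> set (PR @ NS)" for c
  proof (cases "c \<in> set PR")
    case False
    then obtain y where y: "y \<in> set S" "fst y < 0" "c = snd y" using c by (auto simp: NS_def)
    have "\<forall>u\<in>set S. \<forall>v\<in>set S. u \<noteq> v \<longrightarrow> nonprop u v"
      using S(1) by (simp add: proper_def honest_iff_pairwise)
    moreover have "y \<noteq> x0" using y(2) x0(2) by auto
    ultimately show ?thesis using x0(1,3) y(1,3) unfolding nonprop_def by blast
  qed (use t0(2) proportional_sym in blast)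
  moreover have "t0 \<noteq> (0, 0)" using S(1) x0 by (auto simp: proper_def)
  ultimately obtain g where g: "hform 2 g" "\<forall>c\<in>set (PR @ NS). ev g c = 0" "ev g t0 \<noteq> 0"
    using separating_quadratic[of "PR @ NS" t0] by auto
  have "powsum S \<noteq> powsum R"
    by (rule separating_square[OF g(1) _ _ x0(1,2)]) (use g(2,3) x0(3) in \<open>auto simp: NS_def PR_def\<close>)
  thus False using S(2) R(2) by (simp add: is_representation_iff)
qed

lemma short_representation_least:
  assumes "proper S" "is_representation p S" "length S \<le> 3" "proper R" "is_representation p R"
  shows "badge_le (badge S) (badge R)"
proof -
  have "is_representation (\<lambda>x y. - p x y) (negate T)" if "is_representation p T" for T
    using that by (auto simp: is_representation_iff negate_def fun_eq_iff powsum_negate[unfolded negate_def])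
  hence "fst (badge (negate S)) \<le> fst (badge (negate R))"
    using assms by (intro short_representation_least_positive) (auto simp: proper_negate)
  moreover have "fst (badge S) \<le> fst (badge R)" by (rule short_representation_least_positive[OF assms])
  ultimately show ?thesis by (simp add: badge_le_def badge_negate)
qed

lemma badge_above_reduced:
  assumes "t \<in> badges p"
  shows "\<exists>R. is_representation p R \<and> proper R \<and> (length R \<le> 3 \<or> badge R = (2, 2)) \<and> badge_le (badge R) t"
proof -
  obtain R0 where R0: "t = badge R0" "is_representation p R0"
    using assms unfolding badges_def by blast
  obtain R1 where R1: "is_representation p R1" "proper R1" "badge_le (badge R1) t"
    using proper_representation[of R0] R0 by (auto simp: is_representation_iff)
  thus ?thesis using reduce[OF R1(2,1)] by (blast intro: badge_le_trans)
qed

lemma proper_badge_in_badges: "is_representation p R \<Longrightarrow> proper R \<Longrightarrow> badge R \<in> badges p"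
  unfolding badges_def proper_def by blast

lemma least_badge:
  assumes "binary_quartic p"
  shows "\<exists>s\<in>badges p. \<forall>t\<in>badges p. badge_le s t"
proof (cases "\<exists>S. proper S \<and> is_representation p S \<and> length S \<le> 3")
  case True
  then obtain S where S: "proper S" "is_representation p S" "length S \<le> 3" by blast
  have "badge_le (badge S) t" if "t \<in> badges p" for t
    using badge_above_reduced[OF that] short_representation_least[OF S] badge_le_trans by blast
  thus ?thesis using proper_badge_in_badges[OF S(2,1)] by blast
next
  case False
  obtain R0 where "p = powsum R0" using binary_quartic_powsum[OF assms] .
  then obtain R where "is_representation p R" "proper R"
    using proper_representation[of R0] by blast
  then obtain R' where "is_representation p R'" "proper R'" "badge R' = (2, 2)"
    using reduce False by blast
  hence "(2, 2) \<in> badges p" using proper_badge_in_badges by metis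
  moreover have "badge_le (2, 2) t" if "t \<in> badges p" for t
    using badge_above_reduced[OF that] False by auto
  ultimately show ?thesis by blast
qed

lemma unique_signature_of_least:
  assumes "s \<in> badges p" "\<forall>t\<in>badges p. badge_le s t"
  shows "\<exists>!s. is_signature p s"
proof
  show "is_signature p s" using assms badge_le_antisym unfolding is_signature_def by blast
  fix s' assume "is_signature p s'"
  thus "s' = s" using assms unfolding is_signature_def by blast
qed

theorem theorem4p1:
  fixes p :: "real \<Rightarrow> real \<Rightarrow> real"
  assumes "binary_quartic p"
  shows "\<exists>!s. is_signature p s"
  using least_badge[OF assms] unique_signature_of_least by blast

end
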